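(* Let $H$ be a pre-Schreier monoid. Then $1s\Rightarrow 0s$, $3s\Rightarrow 0s$, $1s\Leftrightarrow 2s$, $2s\Rightarrow 3s$, $1s\Rightarrow 4s$, $2s\Rightarrow 5s$, $3s\Rightarrow 6s$, $4s\Leftrightarrow 5s$, $4s\Rightarrow 4's$, $5s\Rightarrow 5's$.
   Context: A monoid means a commutative cancellative monoid (written multiplicatively); $H^{\ast}$ is its unit group, $\mathbb{N}=\{1,2,\dots\}$, $\mathbb{N}_0=\{0,1,2,\dots\}$. Elements are relatively prime ($a\perp b$) if all their common divisors are units. $\mathrm{Sqf}\,H$: elements not of the form $b^2c$ with $b,c\in H$, $b\notin H^{\ast}$. $H$ is pre-Schreier if for all $a,b,c\in H$ with $a\mid bc$ there exist $a_1,a_2\in H$ with $a=a_1a_2$, $a_1\mid b$, $a_2\mid c$. The conditions, each required for every $a\in H$: 0s: $a=s_1\cdots s_n$ for some $n\in\mathbb{N}$, $s_i\in\mathrm{Sqf}\,H$; 1s: $a=s_1s_2^2\cdots s_n^n$ with $n\in\mathbb{N}$, $s_i\in\mathrm{Sqf}\,H$, $s_i\perp s_j$ for $i\ne j$; 2s: $a=s_1\cdots s_n$ with $n\in\mathbb{N}$, $s_i\in\mathrm{Sqf}\,H$, $s_i\mid s_{i+1}$ for $i<n$; 3s: $a=s_0s_1^2s_2^{2^2}\cdots s_n^{2^n}$ with $n\in\mathbb{N}_0$, $s_i\in\mathrm{Sqf}\,H$; 4s: $a=bc$ with $b\in H$, $c\in\mathrm{Sqf}\,H$, $b\perp c$,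 and some $d\in\mathrm{Sqf}\,H$ with $d^2\mid b$, $b\mid d^n$ for some $n\in\mathbb{N}$; 4's: $a=bc$ with $b\in H$, $c\in\mathrm{Sqf}\,H$, $b\perp c$, and every $d\in\mathrm{Sqf}\,H$ with $d\mid b$ satisfies $d^2\mid b$; 5s: $a=bc$ with $b\in H$, $c\in\mathrm{Sqf}\,H$ and $a\mid c^n$ for some $n\in\mathbb{N}$; 5's: $a=bc$ with $b\in H$, $c\in\mathrm{Sqf}\,H$ and every $d\in\mathrm{Sqf}\,H$ with $d\mid a$ satisfies $d\mid c$; 6s: $a=b^2c$ with $b\in H$, $c\in\mathrm{Sqf}\,H$. *)

theory Defs
  imports Main
begin

text \<open>A monoid is modelled as a type of class comm_monoid_mult (commutative monoid,
  written multiplicatively) together with the cancellation law.\<close>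

definition cancellative :: "'a::comm_monoid_mult itself \<Rightarrow> bool" where
  "cancellative T \<longleftrightarrow> (\<forall>a b c :: 'a. a * b = a * c \<longrightarrow> b = c)"

definition munit :: "'a::comm_monoid_mult \<Rightarrow> bool" where
  "munit a \<longleftrightarrow> a dvd 1"

definition relprime :: "'a::comm_monoid_mult \<Rightarrow> 'a \<Rightarrow> bool" where
  "relprime a b \<longleftrightarrow> (\<forall>d. d dvd a \<and> d dvd b \<longrightarrow> munit d)"

definition Sqf :: "'a::comm_monoid_mult \<Rightarrow> bool" where
  "Sqf a \<longleftrightarrow> \<not> (\<exists>b c. a = b^2 * c \<and> \<not> munit b)"

definition pre_Schreier :: "'a::comm_monoid_mult itself \<Rightarrow> bool" where
  "pre_Schreier T \<longleftrightarrow> (\<forall>a b c :: 'a. a dvd b * c \<longrightarrow>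
      (\<exists>a1 a2. a = a1 * a2 \<and> a1 dvd b \<and> a2 dvd c))"

definition cond0s :: "'a::comm_monoid_mult itself \<Rightarrow> bool" where
  "cond0s T \<longleftrightarrow> (\<forall>a :: 'a. \<exists>n::nat \<ge> 1. \<exists>s. (\<forall>i\<in>{1..n}. Sqf (s i)) \<and>
      a = (\<Prod>i=1..n. s i))"

definition cond1s :: "'a::comm_monoid_mult itself \<Rightarrow> bool" where
  "cond1s T \<longleftrightarrow> (\<forall>a :: 'a. \<exists>n::nat \<ge> 1. \<exists>s. (\<forall>i\<in>{1..n}. Sqf (s i)) \<and>
      (\<forall>i\<in>{1..n}. \<forall>j\<in>{1..n}. i \<noteq> j \<longrightarrow> relprime (s i) (s j)) \<and>
      a = (\<Prod>i=1..n. s i ^ i))"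

definition cond2s :: "'a::comm_monoid_mult itself \<Rightarrow> bool" where
  "cond2s T \<longleftrightarrow> (\<forall>a :: 'a. \<exists>n::nat \<ge> 1. \<exists>s. (\<forall>i\<in>{1..n}. Sqf (s i)) \<and>
      (\<forall>i. 1 \<le> i \<and> i < n \<longrightarrow> s i dvd s (i + 1)) \<and>
      a = (\<Prod>i=1..n. s i))"

definition cond3s :: "'a::comm_monoid_mult itself \<Rightarrow> bool" where
  "cond3s T \<longleftrightarrow> (\<forall>a :: 'a. \<exists>n::nat. \<exists>s. (\<forall>i\<in>{0..n}. Sqf (s i)) \<and>
      a = (\<Prod>i=0..n. s i ^ (2 ^ i)))"

definition cond4s :: "'a::comm_monoid_mult itself \<Rightarrow> bool" where
  "cond4s T \<longleftrightarrow> (\<forall>a :: 'a. \<exists>b c. a = b * c \<and> Sqf c \<and> relprime b c \<and>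
      (\<exists>d. Sqf d \<and> d^2 dvd b \<and> (\<exists>n::nat \<ge> 1. b dvd d ^ n)))"

definition cond4's :: "'a::comm_monoid_mult itself \<Rightarrow> bool" where
  "cond4's T \<longleftrightarrow> (\<forall>a :: 'a. \<exists>b c. a = b * c \<and> Sqf c \<and> relprime b c \<and>
      (\<forall>d. Sqf d \<and> d dvd b \<longrightarrow> d^2 dvd b))"

definition cond5s :: "'a::comm_monoid_mult itself \<Rightarrow> bool" where
  "cond5s T \<longleftrightarrow> (\<forall>a :: 'a. \<exists>b c. a = b * c \<and> Sqf c \<and>
      (\<exists>n::nat \<ge> 1. a dvd c ^ n))"

definition cond5's :: "'a::comm_monoid_mult itself \<Rightarrow> bool" where
  "cond5's T \<longleftrightarrow> (\<forall>a :: 'a. \<exists>b c. a = b * c \<and> Sqf c \<and>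
      (\<forall>d. Sqf d \<and> d dvd a \<longrightarrow> d dvd c))"

definition cond6s :: "'a::comm_monoid_mult itself \<Rightarrow> bool" where
  "cond6s T \<longleftrightarrow> (\<forall>a :: 'a. \<exists>b c. a = b^2 * c \<and> Sqf c)"

end

theory Submission
  imports Defs
begin

text \<open>
  In a pre-Schreier monoid relative primality behaves as in a factorial monoid: Euclid's
  lemma holds, a product of pairwise coprime squarefree elements is squarefree, and a
  squarefree divisor of \<open>d ^ n\<close> divides \<open>d\<close>. A pairwise coprime squarefree family
  \<open>s 1, \<dots>, s n\<close> and a squarefree divisor chain \<open>t 1 | \<dots> | t n\<close> then determine each
  other via \<open>t i = s (n + 1 - i) * \<dots> * s n\<close>, which rewrites \<open>s 1 * s 2 ^ 2 * \<dots> * s n ^ n\<close>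
  as \<open>t 1 * \<dots> * t n\<close> (1s \<longleftrightarrow> 2s); writing the exponents in binary gives 3s; and 4s and 5s
  are exchanged by moving the radical \<open>d\<close> of \<open>b\<close> between \<open>b\<close> and \<open>c\<close>.
\<close>

section \<open>Squarefree and relatively prime elements\<close>

lemma munit_mult: "munit a \<Longrightarrow> munit b \<Longrightarrow> munit (a * b)"
  unfolding munit_def using mult_dvd_mono[of a 1 b 1] by simp

lemma Sqf_iff_power2_dvd: "Sqf a \<longleftrightarrow> (\<forall>b. b^2 dvd a \<longrightarrow> munit b)"
  unfolding Sqf_def dvd_def by blast

lemma Sqf_dvd: "Sqf a \<Longrightarrow> d dvd a \<Longrightarrow> Sqf d"
  unfolding Sqf_iff_power2_dvd using dvd_trans by blast

lemma Sqf_1: "Sqf 1"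
  unfolding Sqf_iff_power2_dvd munit_def by (simp add: power2_eq_square dvd_mult_left)

lemma Sqf_imp_relprime:
  assumes "Sqf c" and "a * b dvd c"
  shows "relprime a b"
  unfolding relprime_def
proof (intro allI impI)
  fix d assume "d dvd a \<and> d dvd b"
  then have "d * d dvd a * b"
    by (intro mult_dvd_mono) simp_all
  then have "d^2 dvd c"
    using assms(2) unfolding power2_eq_square by (rule dvd_trans)
  then show "munit d"
    using assms(1) unfolding Sqf_iff_power2_dvd by blast
qed

lemma relprime_commute: "relprime a b \<longleftrightarrow> relprime b a"
  unfolding relprime_def by blast

lemma relprime_dvd_left: "relprime a b \<Longrightarrow> a' dvd a \<Longrightarrow> relprime a' b"
  unfolding relprime_def using dvd_trans by blast

lemma relprime_unit_right: "b dvd 1 \<Longrightarrow> relprime a b"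
  unfolding relprime_def munit_def using dvd_trans by blast

definition coprime_sqf_family :: "'b set \<Rightarrow> ('b \<Rightarrow> 'a::comm_monoid_mult) \<Rightarrow> bool" where
  "coprime_sqf_family I s \<longleftrightarrow> (\<forall>i\<in>I. Sqf (s i)) \<and> pairwise (\<lambda>i j. relprime (s i) (s j)) I"

lemma coprime_sqf_family_if_Sqf_prod:
  assumes "finite I" and "Sqf (prod s I)"
  shows "coprime_sqf_family I s"
  unfolding coprime_sqf_family_def pairwise_def
proof (intro conjI ballI impI)
  show "Sqf (s i)" if "i \<in> I" for i
  proof (rule Sqf_dvd[OF assms(2)])
    show "s i dvd prod s I"
      using prod_dvd_prod_subset[of I "{i}" s] assms(1) that by simp
  qed
  show "relprime (s i) (s j)" if "i \<in> I" "j \<in> I" "i \<noteq> j" for i j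
  proof (rule Sqf_imp_relprime[OF assms(2)])
    have "prod s {i, j} dvd prod s I"
      using that assms(1) by (intro prod_dvd_prod_subset) auto
    then show "s i * s j dvd prod s I"
      using that(3) by simp
  qed
qed

definition sqf_product :: "'a::comm_monoid_mult \<Rightarrow> bool" where
  "sqf_product a \<longleftrightarrow> (\<exists>n::nat \<ge> 1. \<exists>s. (\<forall>i\<in>{1..n}. Sqf (s i)) \<and> a = (\<Prod>i=1..n. s i))"

lemma cond0s_iff_sqf_product: "cond0s (T::'a::comm_monoid_mult itself) \<longleftrightarrow> (\<forall>a::'a. sqf_product a)"
  unfolding cond0s_def sqf_product_def ..

lemma sqf_product_if_Sqf: "Sqf a \<Longrightarrow> sqf_product a"
  unfolding sqf_product_def by (intro exI[of _ 1] conjI exI[of _ "\<lambda>_. a"]) simp_all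

lemma sqf_product_mult:
  assumes "sqf_product a" and "sqf_product b"
  shows "sqf_product (a * b)"
proof -
  obtain m :: nat and s where m: "m \<ge> 1" "\<forall>i\<in>{1..m}. Sqf (s i)" "a = (\<Prod>i=1..m. s i)"
    using assms(1) unfolding sqf_product_def by blast
  obtain n :: nat and t where n: "\<forall>i\<in>{1..n}. Sqf (t i)" "b = (\<Prod>i=1..n. t i)"
    using assms(2) unfolding sqf_product_def by blast
  define u where "u i = (if i \<le> m then s i else t (i - m))" for i
  have "(\<Prod>i=1..m + n. u i) = (\<Prod>i=1..m. u i) * (\<Prod>i=m+1..m + n. u i)"
    by (rule prod.ub_add_nat) simp
  also have "(\<Prod>i=m+1..m + n. u i) = (\<Prod>i=1..n. u (i + m))"
    using prod.shift_bounds_cl_nat_ivl[of u 1 m n] by (simp add: add.commute)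
  finally have "a * b = (\<Prod>i=1..m + n. u i)"
    using m(3) n(2) by (simp add: u_def)
  moreover have "Sqf (u i)" if "i \<in> {1..m + n}" for i
  proof (cases "i \<le> m")
    case False
    then have "i - m \<in> {1..n}"
      using that by auto
    then show ?thesis
      using n(1) False by (simp add: u_def)
  qed (use m(2) that in \<open>simp add: u_def\<close>)
  ultimately show ?thesis
    unfolding sqf_product_def using m(1) by (intro exI[of _ "m + n"] conjI exI[of _ u]) auto
qed

lemma sqf_product_prod: "(\<And>i. i \<in> I \<Longrightarrow> sqf_product (f i)) \<Longrightarrow> sqf_product (prod f I)"
  by (induction I rule: infinite_finite_induct)
    (simp_all add: sqf_product_if_Sqf Sqf_1 sqf_product_mult)

lemma sqf_product_power: "sqf_product a \<Longrightarrow> sqf_product (a ^ k)"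
  using sqf_product_prod[of "{..<k}" "\<lambda>_. a"] by simp

lemma prod_power_distrib_monoid: "prod f A ^ n = (\<Prod>x\<in>A. (f x :: 'a::comm_monoid_mult) ^ n)"
  by (induction A rule: infinite_finite_induct) (simp_all add: power_mult_distrib)

lemma le_imp_power_dvd_monoid: "m \<le> n \<Longrightarrow> (a::'a::comm_monoid_mult) ^ m dvd a ^ n"
  by (metis le_add_diff_inverse power_add dvd_triv_left)

lemma prod_power_halve:
  assumes "finite I"
  shows "(\<Prod>i\<in>I. (s i :: 'a::comm_monoid_mult) ^ e i)
    = (\<Prod>i\<in>{i\<in>I. odd (e i)}. s i) * (\<Prod>i\<in>I. s i ^ (e i div 2))^2"
proof -
  have "s i ^ e i = (if odd (e i) then s i else 1) * (s i ^ (e i div 2))^2" for i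
  proof -
    have "s i ^ e i = s i ^ (e i mod 2) * (s i ^ (e i div 2))^2"
      by (metis div_mult_mod_eq power_add power_mult mult.commute)
    then show ?thesis
      by (simp add: odd_iff_mod_2_eq_one even_iff_mod_2_eq_zero)
  qed
  then show ?thesis
    using assms by (simp add: prod.distrib prod.inter_filter prod_power_distrib_monoid)
qed

lemma prod_powers_eq_prod_tails:
  "(\<Prod>i=1..n. (s i :: 'a::comm_monoid_mult) ^ i) = (\<Prod>i=1..n. \<Prod>j\<in>{j\<in>{1..n}. n < i + j}. s j)"
proof -
  have "(\<Prod>i=1..n. \<Prod>j\<in>{j\<in>{1..n}. n < i + j}. s j) = (\<Prod>j=1..n. \<Prod>i\<in>{i\<in>{1..n}. n < i + j}. s j)"
    by (rule prod.swap_restrict) simp_all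
  also have "\<dots> = (\<Prod>j=1..n. s j ^ j)"
  proof (rule prod.cong)
    fix j assume "j \<in> {1..n}"
    then have "{i\<in>{1..n}. n < i + j} = {n + 1 - j..n}"
      by auto
    then show "(\<Prod>i\<in>{i\<in>{1..n}. n < i + j}. s j) = s j ^ j"
      using \<open>j \<in> {1..n}\<close> by simp
  qed simp
  finally show ?thesis ..
qed

lemma chain_prod_eq_prod_powers:
  fixes t :: "nat \<Rightarrow> 'a::comm_monoid_mult"
  assumes "1 \<le> n" and "\<forall>i. 1 \<le> i \<and> i < n \<longrightarrow> t i dvd t (i + 1)"
  shows "\<exists>s. (\<Prod>i=1..n. t i) = (\<Prod>i=1..n. s i ^ i) \<and> t n = (\<Prod>i=1..n. s i)"
  using assms
proof (induction n rule: nat_induct_at_least)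
  case base
  show ?case
    by (intro exI[of _ t]) simp
next
  case (Suc n)
  obtain s where s: "(\<Prod>i=1..n. t i) = (\<Prod>i=1..n. s i ^ i)" "t n = (\<Prod>i=1..n. s i)"
    using Suc by auto
  obtain r where r: "t (Suc n) = t n * r"
    using Suc.prems Suc.hyps by fastforce
  define s' where "s' i = (if i = 1 then r else s (i - 1))" for i
  have split_first: "(\<Prod>i=1..Suc n. f i) = f 1 * (\<Prod>i=1..n. f (Suc i))" for f :: "nat \<Rightarrow> 'a"
  proof -
    have "(\<Prod>i=1..Suc n. f i) = f 1 * (\<Prod>i=Suc 1..Suc n. f i)"
      by (rule prod.atLeast_Suc_atMost) simp
    then show ?thesis
      by (simp only: prod.shift_bounds_cl_Suc_ivl)
  qed
  have "(\<Prod>i=1..Suc n. s' i) = r * (\<Prod>i=1..n. s i)"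
    unfolding split_first by (simp add: s'_def)
  then have "t (Suc n) = (\<Prod>i=1..Suc n. s' i)"
    using r s(2) by (simp add: mult.commute)
  moreover have "(\<Prod>i=1..Suc n. s' i ^ i) = r * (\<Prod>i=1..n. s i * s i ^ i)"
    unfolding split_first by (simp add: s'_def)
  then have "(\<Prod>i=1..Suc n. t i) = (\<Prod>i=1..Suc n. s' i ^ i)"
    using r s by (simp add: prod.distrib ac_simps)
  ultimately show ?case
    by blast
qed

lemma chain_dvd_last:
  fixes t :: "nat \<Rightarrow> 'a::comm_monoid_mult"
  assumes "\<forall>i. 1 \<le> i \<and> i < n \<longrightarrow> t i dvd t (i + 1)" and "1 \<le> i" and "i \<le> n"
  shows "t i dvd t n"
proof -
  have "i + k \<le> n \<Longrightarrow> t i dvd t (i + k)" for k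
  proof (induction k)
    case (Suc k)
    then have "t i dvd t (i + k)" "t (i + k) dvd t (i + k + 1)"
      using assms(1,2) by auto
    then have "t i dvd t (i + k + 1)"
      by (rule dvd_trans)
    then show ?case
      by simp
  qed simp
  from this[of "n - i"] show ?thesis
    using assms(3) by simp
qed

section \<open>Pre-Schreier monoids\<close>

locale pre_Schreier_monoid =
  fixes T :: "'a::comm_monoid_mult itself"
  assumes pre_Schreier: "pre_Schreier T"
begin

lemma pre_Schreier_dvd_mult:
  "(a::'a) dvd b * c \<Longrightarrow> \<exists>a1 a2. a = a1 * a2 \<and> a1 dvd b \<and> a2 dvd c"
  using pre_Schreier unfolding pre_Schreier_def by (elim allE impE)

lemma relprime_dvd_mult:
  assumes "relprime a b" and "(a::'a) dvd b * c"
  shows "a dvd c"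
proof -
  obtain a1 a2 where a: "a = a1 * a2" "a1 dvd b" "a2 dvd c"
    using pre_Schreier_dvd_mult[OF assms(2)] by blast
  have "a1 dvd 1"
    using assms(1) a unfolding relprime_def munit_def by simp
  then have "a1 * a2 dvd 1 * c"
    using a(3) by (rule mult_dvd_mono)
  then show ?thesis
    using a(1) by simp
qed

lemma relprime_mult_right:
  assumes "relprime a b" and "relprime (a::'a) c"
  shows "relprime a (b * c)"
  unfolding relprime_def
proof (intro allI impI)
  fix d assume d: "d dvd a \<and> d dvd b * c"
  then obtain d1 d2 where dd: "d = d1 * d2" "d1 dvd b" "d2 dvd c"
    using pre_Schreier_dvd_mult by blast
  then have "d1 dvd a" "d2 dvd a"
    using d by (auto intro: dvd_mult_left dvd_mult_right dvd_trans)
  then have "munit d1" "munit d2"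
    using assms dd unfolding relprime_def by blast+
  then show "munit d"
    using dd(1) munit_mult by simp
qed

lemma relprime_power_right: "relprime (a::'a) b \<Longrightarrow> relprime a (b ^ k)"
  by (induction k) (simp_all add: relprime_unit_right relprime_mult_right)

lemma relprime_prod_right: "(\<And>i. i \<in> I \<Longrightarrow> relprime (a::'a) (f i)) \<Longrightarrow> relprime a (prod f I)"
  by (induction I rule: infinite_finite_induct) (simp_all add: relprime_unit_right relprime_mult_right)

lemma relprime_mult_dvd:
  assumes "x dvd d" and "y dvd (d::'a)" and "relprime x y"
  shows "x * y dvd d"
proof -
  obtain d' where d: "d = x * d'"
    using assms(1) by blast
  have "y dvd d'"
    using assms(2,3) d relprime_dvd_mult relprime_commute by blast
  then show ?thesis
    unfolding d by (rule mult_dvd_mono[OF dvd_refl])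
qed

lemma Sqf_mult:
  assumes s: "Sqf (s::'a)" and t: "Sqf t" and st: "relprime s t"
  shows "Sqf (s * t)"
  unfolding Sqf_iff_power2_dvd
proof (intro allI impI)
  fix b assume b: "b^2 dvd s * t"
  then have "b dvd s * t"
    unfolding power2_eq_square by (rule dvd_mult_left)
  then obtain b1 b2 where bb: "b = b1 * b2" "b1 dvd s" "b2 dvd t"
    using pre_Schreier_dvd_mult by blast
  have "b1^2 dvd b^2" "b2^2 dvd b^2"
    using bb(1) by (simp_all add: power_mult_distrib)
  then have b1: "b1^2 dvd t * s" and b2: "b2^2 dvd s * t"
    using b dvd_trans by (auto simp: mult.commute)
  have "relprime (b1^2) t"
    using relprime_power_right[of t b1 2] relprime_dvd_left[OF st bb(2)]
    by (simp add: relprime_commute)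
  then have "munit b1"
    using s relprime_dvd_mult[OF _ b1] unfolding Sqf_iff_power2_dvd by blast
  moreover have "relprime (b2^2) s"
    using relprime_power_right[of s b2 2] relprime_dvd_left[of t s b2] st bb(3)
    by (simp add: relprime_commute)
  then have "munit b2"
    using t relprime_dvd_mult[OF _ b2] unfolding Sqf_iff_power2_dvd by blast
  ultimately show "munit b"
    using bb(1) munit_mult by simp
qed

lemma Sqf_prod:
  assumes "coprime_sqf_family I (s::'b \<Rightarrow> 'a)" and "J \<subseteq> I"
  shows "Sqf (prod s J)"
  using assms(2)
proof (induction J rule: infinite_finite_induct)
  case (insert j J)
  have family: "\<forall>i\<in>I. Sqf (s i)" "pairwise (\<lambda>i j. relprime (s i) (s j)) I"
    using assms(1) unfolding coprime_sqf_family_def by simp_all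
  have "relprime (s j) (s i)" if "i \<in> J" for i
  proof (rule pairwiseD[OF family(2)])
    show "j \<in> I" "i \<in> I" "j \<noteq> i"
      using insert.hyps(2) insert.prems that by auto
  qed
  then have "relprime (s j) (prod s J)"
    by (rule relprime_prod_right)
  moreover have "Sqf (s j)" "Sqf (prod s J)"
    using family(1) insert by simp_all
  ultimately have "Sqf (s j * prod s J)"
    by (intro Sqf_mult)
  then show ?case
    using insert.hyps by simp
qed (simp_all add: Sqf_1)

lemma Sqf_dvd_power_imp_dvd: "Sqf e \<Longrightarrow> e dvd (d::'a) ^ n \<Longrightarrow> e dvd d"
proof (induction n arbitrary: e)
  case 0
  then show ?case
    by (simp add: dvd_trans[OF _ one_dvd])
next
  case (Suc n)
  obtain e1 e2 where e: "e = e1 * e2" "e1 dvd d" "e2 dvd d ^ n"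
    using pre_Schreier_dvd_mult Suc.prems(2) by (metis power_Suc)
  have "e2 dvd d"
    using Suc.IH Sqf_dvd[OF Suc.prems(1)] e by simp
  moreover have "relprime e1 e2"
    using Suc.prems(1) e(1) by (auto intro: Sqf_imp_relprime)
  ultimately show ?case
    using relprime_mult_dvd e by simp
qed

text \<open>In a GCD monoid, \<open>d = gcd b c\<close>.\<close>

lemma Sqf_power_divisor_split:
  assumes "Sqf (c::'a)" and "b dvd c ^ k"
  shows "\<exists>d c'. c = d * c' \<and> d dvd b \<and> b dvd d ^ k \<and> relprime c' b"
  using assms(2)
proof (induction k arbitrary: b)
  case 0
  then have "relprime c b"
    by (simp add: relprime_unit_right)
  then show ?case
    using "0" by (intro exI[of _ 1] exI[of _ c]) simp
next
  case (Suc k)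
  obtain b1 b2 where b: "b = b1 * b2" "b1 dvd c" "b2 dvd c ^ k"
    using Suc.prems pre_Schreier_dvd_mult by (metis power_Suc)
  obtain d2 c2 where dc: "c = d2 * c2" "d2 dvd b2" "b2 dvd d2 ^ k" "relprime c2 b2"
    using Suc.IH[OF b(3)] by blast
  obtain e1 e2 where e: "b1 = e1 * e2" "e1 dvd d2" "e2 dvd c2"
    using b(2) dc(1) pre_Schreier_dvd_mult by metis
  obtain c' where c': "c2 = e2 * c'"
    using e(3) by blast
  have b_eq: "b = (e1 * b2) * e2"
    using b(1) e(1) by (simp add: ac_simps)
  have "c = (d2 * e2) * c'"
    using dc(1) c' by (simp add: ac_simps)
  moreover have "d2 * e2 dvd b"
    unfolding b_eq using dc(2) by (intro mult_dvd_mono) simp_all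
  moreover have "b dvd (d2 * e2) ^ Suc k"
  proof -
    have "(e1 * b2) * e2 dvd (d2 * d2 ^ k) * (e2 * e2 ^ k)"
      using e(2) dc(3) by (intro mult_dvd_mono) simp_all
    then show ?thesis
      using b_eq by (simp add: power_mult_distrib ac_simps)
  qed
  moreover have "relprime c' b"
  proof -
    have "c = (c' * e2) * d2" "c = (c' * d2) * e2"
      using dc(1) c' by (simp_all add: ac_simps)
    then have "relprime c' e2" "relprime c' d2"
      using Sqf_imp_relprime[OF assms(1)] dvd_triv_left by metis+
    moreover have "relprime c' b2"
      using dc(4) c' by (auto intro: relprime_dvd_left)
    moreover have "relprime c' e1"
      using \<open>relprime c' d2\<close> e(2) relprime_dvd_left relprime_commute by blast
    ultimately show ?thesis
      using b_eq relprime_mult_right by simp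
  qed
  ultimately show ?case
    by blast
qed

lemma prod_powers_binary_expansion:
  assumes "finite I" and "coprime_sqf_family I (s::'b \<Rightarrow> 'a)"
  shows "\<exists>N u. (\<forall>j\<in>{0..N}. Sqf (u j)) \<and> (\<Prod>i\<in>I. s i ^ e i) = (\<Prod>j=0..N. u j ^ 2 ^ j)"
proof -
  have "\<exists>N u. (\<forall>j\<in>{0..N}. Sqf (u j)) \<and> (\<Prod>i\<in>I. s i ^ e i) = (\<Prod>j=0..N. u j ^ 2 ^ j)"
    if "\<forall>i\<in>I. e i < 2 ^ m" for m e
    using that
  proof (induction m arbitrary: e)
    case 0
    then show ?case
      by (intro exI[of _ 0] exI[of _ "\<lambda>_. 1"]) (simp add: Sqf_1)
  next
    case (Suc m)
    have "\<forall>i\<in>I. e i div 2 < 2 ^ m"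
      using Suc.prems by (simp add: div_less_iff_less_mult mult.commute)
    then obtain N v where v: "\<forall>j\<in>{0..N}. Sqf (v j)"
      "(\<Prod>i\<in>I. s i ^ (e i div 2)) = (\<Prod>j=0..N. v j ^ 2 ^ j)"
      using Suc.IH[of "\<lambda>i. e i div 2"] by blast
    define u where "u j = (if j = 0 then \<Prod>i\<in>{i\<in>I. odd (e i)}. s i else v (j - 1))" for j
    have "(\<Prod>i\<in>I. s i ^ e i) = u 0 * (\<Prod>j=0..N. v j ^ 2 ^ j)^2"
      unfolding prod_power_halve[OF assms(1), of s e] v(2) by (simp add: u_def)
    also have "\<dots> = (\<Prod>j=0..Suc N. u j ^ 2 ^ j)"
      unfolding prod.atLeast0_atMost_Suc_shift
      by (simp add: prod_power_distrib_monoid u_def mult.commute flip: power_mult)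
    finally have "(\<Prod>i\<in>I. s i ^ e i) = (\<Prod>j=0..Suc N. u j ^ 2 ^ j)" .
    moreover have "\<forall>j\<in>{0..Suc N}. Sqf (u j)"
      using v(1) Sqf_prod[OF assms(2)] by (auto simp: u_def)
    ultimately show ?case
      by blast
  qed
  moreover have "\<forall>i\<in>I. e i < 2 ^ (\<Sum>i\<in>I. e i)"
    using assms(1) member_le_sum[of _ I e] less_exp le_less_trans by blast
  ultimately show ?thesis
    by blast
qed

end

section \<open>The implications between the conditions\<close>

lemma cancellativeD:
  "cancellative (T::'a::comm_monoid_mult itself) \<Longrightarrow> (a::'a) * b = a * c \<Longrightarrow> b = c"
  unfolding cancellative_def by metis

lemma cond1s_iff_coprime_sqf_family:
  "cond1s (T::'a::comm_monoid_mult itself) \<longleftrightarrow>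
    (\<forall>a::'a. \<exists>n::nat \<ge> 1. \<exists>s. coprime_sqf_family {1..n} s \<and> a = (\<Prod>i=1..n. s i ^ i))"
  unfolding cond1s_def coprime_sqf_family_def pairwise_def by blast

lemma cond2s_imp_cond0s: "cond2s T \<Longrightarrow> cond0s T"
  unfolding cond0s_def cond2s_def by blast

lemma cond2s_imp_cond1s:
  assumes "cond2s (T::'a::comm_monoid_mult itself)"
  shows "cond1s T"
  unfolding cond1s_iff_coprime_sqf_family
proof
  fix a :: 'a
  obtain n :: nat and t where n: "n \<ge> 1" and t: "\<forall>i\<in>{1..n}. Sqf (t i)"
    and chain: "\<forall>i. 1 \<le> i \<and> i < n \<longrightarrow> t i dvd t (i + 1)" and a: "a = (\<Prod>i=1..n. t i)"
    using assms unfolding cond2s_def by blast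
  obtain s where s: "(\<Prod>i=1..n. t i) = (\<Prod>i=1..n. s i ^ i)" "t n = (\<Prod>i=1..n. s i)"
    using chain_prod_eq_prod_powers[OF n chain] by blast
  have "Sqf (t n)"
    using t n by simp
  then have "Sqf (\<Prod>i=1..n. s i)"
    using s(2) by simp
  then have "coprime_sqf_family {1..n} s"
    by (intro coprime_sqf_family_if_Sqf_prod) simp_all
  then show "\<exists>n::nat \<ge> 1. \<exists>s. coprime_sqf_family {1..n} s \<and> a = (\<Prod>i=1..n. s i ^ i)"
    using n a s(1) by blast
qed

lemma cond2s_imp_cond5s:
  assumes "cond2s (T::'a::comm_monoid_mult itself)"
  shows "cond5s T"
  unfolding cond5s_def
proof
  fix a :: 'a
  obtain n :: nat and t where n: "n \<ge> 1" and t: "\<forall>i\<in>{1..n}. Sqf (t i)"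
    and chain: "\<forall>i. 1 \<le> i \<and> i < n \<longrightarrow> t i dvd t (i + 1)" and a: "a = (\<Prod>i=1..n. t i)"
    using assms unfolding cond2s_def by blast
  obtain m where m: "n = Suc m"
    using n by (cases n) simp_all
  have "a = (\<Prod>i=1..m. t i) * t n"
    using a m by simp
  moreover have "a dvd t n ^ n"
    using a prod_dvd_prod[of "{1..n}" t "\<lambda>_. t n"] chain_dvd_last[OF chain] by simp
  moreover have "Sqf (t n)"
    using n t by simp
  ultimately show "\<exists>b c. a = b * c \<and> Sqf c \<and> (\<exists>n::nat \<ge> 1. a dvd c ^ n)"
    using n by blast
qed

lemma cond3s_imp_cond0s:
  assumes "cond3s (T::'a::comm_monoid_mult itself)"
  shows "cond0s T"
  unfolding cond0s_iff_sqf_product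
proof
  fix a :: 'a
  obtain n s where s: "\<forall>i\<in>{0..n}. Sqf (s i)" and a: "a = (\<Prod>i=0..n. s i ^ 2 ^ i)"
    using assms unfolding cond3s_def by blast
  show "sqf_product a"
    unfolding a
  proof (rule sqf_product_prod)
    fix i assume "i \<in> {0..n}"
    then show "sqf_product (s i ^ 2 ^ i)"
      using s by (simp add: sqf_product_power sqf_product_if_Sqf)
  qed
qed

lemma cond3s_imp_cond6s:
  assumes "cond3s (T::'a::comm_monoid_mult itself)"
  shows "cond6s T"
  unfolding cond6s_def
proof
  fix a :: 'a
  obtain n s where s: "\<forall>i\<in>{0..n}. Sqf (s i)" and a: "a = (\<Prod>i=0..n. s i ^ 2 ^ i)"
    using assms unfolding cond3s_def by blast
  have "(\<Prod>i=1..n. s i ^ 2 ^ i) = (\<Prod>i=1..n. s i ^ 2 ^ (i - 1))^2"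
    unfolding prod_power_distrib_monoid
  proof (rule prod.cong)
    fix i :: nat assume "i \<in> {1..n}"
    then have "2 ^ i = (2::nat) ^ (i - 1) * 2"
      by (cases i) simp_all
    then show "s i ^ 2 ^ i = (s i ^ 2 ^ (i - 1))^2"
      by (simp flip: power_mult)
  qed simp
  then have "a = (\<Prod>i=1..n. s i ^ 2 ^ (i - 1))^2 * s 0"
    using a by (simp add: prod.atLeast_Suc_atMost[of 0 n] mult.commute)
  moreover have "Sqf (s 0)"
    using s by simp
  ultimately show "\<exists>b c. a = b^2 * c \<and> Sqf c"
    by blast
qed

context pre_Schreier_monoid
begin

lemma cond1s_imp_cond2s:
  assumes "cond1s T"
  shows "cond2s T"
  unfolding cond2s_def
proof
  fix a :: 'a
  obtain n s where n: "n \<ge> 1" and s: "coprime_sqf_family {1..n} s" and a: "a = (\<Prod>i=1..n. s i ^ i)"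
    using assms unfolding cond1s_iff_coprime_sqf_family by blast
  define t where "t i = (\<Prod>j\<in>{j\<in>{1..n}. n < i + j}. s j)" for i
  have "Sqf (t i)" for i
    unfolding t_def by (rule Sqf_prod[OF s]) auto
  moreover have "t i dvd t (i + 1)" for i
    unfolding t_def by (rule prod_dvd_prod_subset) auto
  moreover have "a = (\<Prod>i=1..n. t i)"
    unfolding a t_def by (rule prod_powers_eq_prod_tails)
  ultimately show "\<exists>n::nat \<ge> 1. \<exists>t. (\<forall>i\<in>{1..n}. Sqf (t i)) \<and>
      (\<forall>i. 1 \<le> i \<and> i < n \<longrightarrow> t i dvd t (i + 1)) \<and> a = (\<Prod>i=1..n. t i)"
    using n by blast
qed

lemma cond1s_imp_cond3s:
  assumes "cond1s T"
  shows "cond3s T"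
  unfolding cond3s_def
proof
  fix a :: 'a
  obtain n s where s: "coprime_sqf_family {1..n} s" and a: "a = (\<Prod>i=1..n. s i ^ i)"
    using assms unfolding cond1s_iff_coprime_sqf_family by blast
  then show "\<exists>n. \<exists>u. (\<forall>i\<in>{0..n}. Sqf (u i)) \<and> a = (\<Prod>i=0..n. u i ^ 2 ^ i)"
    using prod_powers_binary_expansion[OF _ s, of "\<lambda>i. i"] by simp
qed

lemma cond1s_imp_cond4s:
  assumes "cond1s T"
  shows "cond4s T"
  unfolding cond4s_def
proof
  fix a :: 'a
  obtain n s where n: "n \<ge> 1" and s: "coprime_sqf_family {1..n} s" and a: "a = (\<Prod>i=1..n. s i ^ i)"
    using assms unfolding cond1s_iff_coprime_sqf_family by blast
  define b where "b = (\<Prod>i=2..n. s i ^ i)"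
  define d where "d = (\<Prod>i=2..n. s i)"
  have "(\<Prod>i=1..n. s i ^ i) = s 1 ^ 1 * (\<Prod>i=Suc 1..n. s i ^ i)"
    by (rule prod.atLeast_Suc_atMost) (use n in simp)
  then have "a = b * s 1"
    using a by (simp add: b_def mult.commute numeral_2_eq_2)
  moreover have "Sqf (s 1)" "Sqf d"
    using s n Sqf_prod[OF s, of "{2..n}"] by (auto simp: coprime_sqf_family_def d_def)
  moreover have "relprime b (s 1)"
  proof -
    have "relprime (s 1) (s i)" if "i \<in> {2..n}" for i
      using s n that by (auto simp: coprime_sqf_family_def pairwise_def)
    then have "relprime (s 1) b"
      unfolding b_def by (intro relprime_prod_right relprime_power_right)
    then show ?thesis
      by (simp add: relprime_commute)
  qed
  moreover have "d^2 dvd b"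
    unfolding b_def d_def prod_power_distrib_monoid
    by (rule prod_dvd_prod, rule le_imp_power_dvd_monoid) simp
  moreover have "b dvd d ^ n"
    unfolding b_def d_def prod_power_distrib_monoid
    by (rule prod_dvd_prod, rule le_imp_power_dvd_monoid) simp
  ultimately show "\<exists>b c. a = b * c \<and> Sqf c \<and> relprime b c \<and>
      (\<exists>d. Sqf d \<and> d^2 dvd b \<and> (\<exists>n::nat \<ge> 1. b dvd d ^ n))"
    using n by blast
qed

lemma cond4s_imp_cond5s:
  assumes "cond4s T"
  shows "cond5s T"
  unfolding cond5s_def
proof
  fix a :: 'a
  obtain b c d n where a: "a = b * c" and c: "Sqf c" and bc: "relprime b c"
    and d: "Sqf d" "d^2 dvd b" and n: "n \<ge> 1" "b dvd d ^ n"
    using assms unfolding cond4s_def by metis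
  have "d dvd b"
    using d(2) unfolding power2_eq_square by (rule dvd_mult_left)
  then obtain b' where b': "b = d * b'"
    by blast
  have "a = b' * (d * c)"
    using a b' by (simp add: ac_simps)
  moreover have "Sqf (d * c)"
    using Sqf_mult[OF d(1) c] relprime_dvd_left[OF bc \<open>d dvd b\<close>] by simp
  moreover have "c dvd c ^ n"
    using le_imp_power_dvd_monoid[OF n(1), of c] by simp
  then have "b * c dvd d ^ n * c ^ n"
    using n(2) by (intro mult_dvd_mono)
  then have "a dvd (d * c) ^ n"
    using a by (simp add: power_mult_distrib)
  ultimately show "\<exists>b c. a = b * c \<and> Sqf c \<and> (\<exists>n::nat \<ge> 1. a dvd c ^ n)"
    using n(1) by blast
qed

lemma radical_decomposition_if_dvd_Sqf_power:
  assumes c: "Sqf (c::'a)" and "b dvd c ^ m"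
  shows "\<exists>b' c'. b * c = b' * c' \<and> Sqf c' \<and> relprime b' c' \<and>
    (\<exists>d. Sqf d \<and> d^2 dvd b' \<and> b' dvd d ^ Suc m)"
proof -
  obtain d c' where dc: "c = d * c'" "d dvd b" "b dvd d ^ m" "relprime c' b"
    using Sqf_power_divisor_split[OF assms] by blast
  have "b * c = (b * d) * c'"
    using dc(1) by (simp add: ac_simps)
  moreover have "Sqf c'" "Sqf d"
    using Sqf_dvd[OF c] dc(1) by simp_all
  moreover have "relprime (b * d) c'"
  proof -
    have "c' * d dvd c"
      using dc(1) by (simp add: mult.commute)
    then have "relprime c' d"
      by (rule Sqf_imp_relprime[OF c])
    then have "relprime c' (b * d)"
      by (rule relprime_mult_right[OF dc(4)])
    then show ?thesis
      unfolding relprime_commute[of "b * d"] .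
  qed
  moreover have "d^2 dvd b * d"
    unfolding power2_eq_square using dc(2) by (rule mult_dvd_mono) simp
  moreover have "b * d dvd d ^ m * d"
    by (rule mult_dvd_mono[OF dc(3) dvd_refl])
  then have "b * d dvd d ^ Suc m"
    by (simp add: mult.commute)
  ultimately show ?thesis
    by blast
qed

lemma cond5s_imp_cond4s:
  assumes "cancellative T" and "cond5s T"
  shows "cond4s T"
  unfolding cond4s_def
proof
  fix a :: 'a
  obtain b c n where a: "a = b * c" and c: "Sqf c" and n: "n \<ge> 1" "a dvd c ^ n"
    using assms(2) unfolding cond5s_def by metis
  obtain m where m: "n = Suc m"
    using n(1) by (cases n) simp_all
  obtain k where "c ^ n = a * k"
    using n(2) by blast
  then have "c * c ^ m = c * (b * k)"
    using a m by (simp add: ac_simps)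
  then have "c ^ m = b * k"
    by (rule cancellativeD[OF assms(1)])
  then have "b dvd c ^ m"
    by simp
  then show "\<exists>b c. a = b * c \<and> Sqf c \<and> relprime b c \<and>
      (\<exists>d. Sqf d \<and> d^2 dvd b \<and> (\<exists>n::nat \<ge> 1. b dvd d ^ n))"
    using radical_decomposition_if_dvd_Sqf_power[OF c] a by fastforce
qed

lemma cond4s_imp_cond4's:
  assumes "cond4s T"
  shows "cond4's T"
  unfolding cond4's_def
proof
  fix a :: 'a
  obtain b c d n where a: "a = b * c" "Sqf c" "relprime b c"
    and d: "d^2 dvd b" "b dvd d ^ n"
    using assms unfolding cond4s_def by metis
  have "e^2 dvd b" if "Sqf e" "e dvd b" for e
  proof -
    have "e dvd d ^ n"
      using that(2) d(2) by (rule dvd_trans)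
    then have "e dvd d"
      by (rule Sqf_dvd_power_imp_dvd[OF that(1)])
    then have "e^2 dvd d^2"
      unfolding power2_eq_square using mult_dvd_mono by blast
    then show ?thesis
      using d(1) by (rule dvd_trans)
  qed
  then show "\<exists>b c. a = b * c \<and> Sqf c \<and> relprime b c \<and> (\<forall>d. Sqf d \<and> d dvd b \<longrightarrow> d^2 dvd b)"
    using a by blast
qed

lemma cond5s_imp_cond5's:
  assumes "cond5s T"
  shows "cond5's T"
  unfolding cond5's_def
proof
  fix a :: 'a
  obtain b c n where a: "a = b * c" "Sqf c" and n: "a dvd c ^ n"
    using assms unfolding cond5s_def by metis
  have "e dvd c" if "Sqf e" "e dvd a" for e
    using that(1) dvd_trans[OF that(2) n] by (rule Sqf_dvd_power_imp_dvd)
  then show "\<exists>b c. a = b * c \<and> Sqf c \<and> (\<forall>d. Sqf d \<and> d dvd a \<longrightarrow> d dvd c)"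
    using a by blast
qed

end

theorem proposition4p3:
  fixes T :: "'a::comm_monoid_mult itself"
  assumes "cancellative T" and "pre_Schreier T"
  shows "(cond1s T \<longrightarrow> cond0s T) \<and> (cond3s T \<longrightarrow> cond0s T) \<and>
         (cond1s T \<longleftrightarrow> cond2s T) \<and> (cond2s T \<longrightarrow> cond3s T) \<and>
         (cond1s T \<longrightarrow> cond4s T) \<and> (cond2s T \<longrightarrow> cond5s T) \<and>
         (cond3s T \<longrightarrow> cond6s T) \<and> (cond4s T \<longleftrightarrow> cond5s T) \<and>
         (cond4s T \<longrightarrow> cond4's T) \<and> (cond5s T \<longrightarrow> cond5's T)"
proof -
  interpret pre_Schreier_monoid T
    using assms(2) by unfold_locales
  have "cond1s T \<longleftrightarrow> cond2s T"
    using cond1s_imp_cond2s cond2s_imp_cond1s by blast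
  moreover have "cond4s T \<longleftrightarrow> cond5s T"
    using cond4s_imp_cond5s cond5s_imp_cond4s[OF assms(1)] by blast
  ultimately show ?thesis
    using cond2s_imp_cond0s cond3s_imp_cond0s cond1s_imp_cond3s cond1s_imp_cond4s
      cond2s_imp_cond5s cond3s_imp_cond6s cond4s_imp_cond4's cond5s_imp_cond5's
    by blast
qed

end
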